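(* Let $K\ge 2$ and let the global alphabet be $\mathcal{A}=[K]=\{1,\dots,K\}$. Let $\Omega_1,\Omega_2\subseteq[K]$ be the (random) sets of parties $P_1$ and $P_2$, and assume $|\Omega_2|$ is fixed and publicly known. Consider any protocol in which $P_2$ sends queries $Q^{[\Omega_2]}_{n}$ to the $N_1$ databases of $P_1$, and database $n$ returns an answer $A^{[\Omega_2]}_n$ satisfying $H(A^{[\Omega_2]}_n\mid Q^{[\Omega_2]}_n,\Omega_1,\mathcal{R}_S)=0$, where $\mathcal{R}_S$ is common randomness shared by $P_1$'s databases. Define the one-symbol messages $W_k=\mathbf{1}\{k\in\Omega_1\}$, $k\in[K]$ (so $L=1$), and the desired index set $\Omega=[K]\setminus\Omega_2$, so $|\Omega|=P=K-|\Omega_2|$. Then the protocol satisfies the three PSU constraints (i) PSU reliability: $H(\Omega_1\cup\Omega_2\mid Q^{[\mathcal{P}_2]}_{[N_1]},A^{[\mathcal{P}_2]}_{[N_1]},\Omega_2)=0$ for every realization $\mathcal{P}_2$; (ii) $P_2$ privacy: $I(\Omega_2;Q^{[\Omega_2]}_{n},A^{[\Omega_2]}_{n},\Omega_1,\mathcal{R}_S)=0$ for all $n\in[N_1]$; (iii) $P_1$ privacy: $I(E_{1,\Omega_2};Q^{[\mathcal{P}_2]}_{[N_1]},A^{[\mathcal{P}_2]}_{[N_1]},\Omega_2)=0$ for every realization $\mathcal{P}_2$, where $E_{1,\Omega_2}=(\mathbf{1}\{k\in\Omega_1\})_{k\in\Omega_2}$; if and only if, viewed as a multi-message symmetric PIR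 protocol with messages $W_{[K]}$ and desired set $\Omega$, it satisfies (i') MM-SPIR reliability: $H(W_{\mathcal{P}}\mid Q_{[N_1]}^{[\mathcal{P}]},A_{[N_1]}^{[\mathcal{P}]},\mathcal{P})=0$ for every realization $\mathcal{P}$ of $\Omega$; (ii') user privacy: $I(\Omega;Q_n^{[\Omega]},A_n^{[\Omega]},W_{[K]},\mathcal{R}_S)=0$ for all $n$; (iii') database privacy: $I(W_{[K]\setminus\mathcal{P}};Q_{[N_1]}^{[\mathcal{P}]},A_{[N_1]}^{[\mathcal{P}]},\mathcal{P})=0$ for every realization $\mathcal{P}$. In this sense PSU is equivalent to MM-SPIR with $L=1$ and $P=|\mathcal{A}|-|\Omega_2|$.
   Context: Notation: $[Z]=\{1,\dots,Z\}$. For a set $\mathcal{S}$ of indices, $W_{\mathcal{S}}=\{W_k:k\in\mathcal{S}\}$. Party $P_2$ (the querying party) generates queries without knowledge of $\Omega_1$; $P_1$'s $N_1$ databases store $\Omega_1$ in replicated form, do not collude, and share common randomness $\mathcal{R}_S$ unknown to $P_2$. *)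

theory Defs
  imports "HOL-Probability.Probability_Mass_Function"
begin

definition joint_pmf :: "'w pmf \<Rightarrow> ('w \<Rightarrow> 'x) \<Rightarrow> ('w \<Rightarrow> 'y) \<Rightarrow> ('x \<times> 'y) pmf" where
  "joint_pmf \<mu> X Y = map_pmf (\<lambda>\<omega>. (X \<omega>, Y \<omega>)) \<mu>"

definition cond_entropy :: "'w pmf \<Rightarrow> ('w \<Rightarrow> 'x) \<Rightarrow> ('w \<Rightarrow> 'y) \<Rightarrow> real" where
  "cond_entropy \<mu> X Y =
     - (\<Sum>(x, y) \<in> set_pmf (joint_pmf \<mu> X Y).
          pmf (joint_pmf \<mu> X Y) (x, y) *
          log 2 (pmf (joint_pmf \<mu> X Y) (x, y) / pmf (map_pmf Y \<mu>) y))"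

definition mutual_info :: "'w pmf \<Rightarrow> ('w \<Rightarrow> 'x) \<Rightarrow> ('w \<Rightarrow> 'y) \<Rightarrow> real" where
  "mutual_info \<mu> X Y =
     (\<Sum>(x, y) \<in> set_pmf (joint_pmf \<mu> X Y).
          pmf (joint_pmf \<mu> X Y) (x, y) *
          log 2 (pmf (joint_pmf \<mu> X Y) (x, y) / (pmf (map_pmf X \<mu>) x * pmf (map_pmf Y \<mu>) y)))"

end

theory Submission
  imports Defs
begin

text \<open>With one-symbol messages \<open>W\<^sub>k = 1{k \<in> \<Omega>\<^sub>1}\<close>, each PSU quantity is an injective relabelling,
  pointwise on the support, of the corresponding MM-SPIR quantity: \<open>\<Omega> = [K] - \<Omega>\<^sub>2\<close> determines
  \<open>\<Omega>\<^sub>2\<close> because all sets lie in \<open>[K]\<close>; the indicator vector on \<open>[K]\<close> determines \<open>\<Omega>\<^sub>1\<close>; and once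
  \<open>\<Omega>\<^sub>2 = P\<^sub>2\<close> is fixed, \<open>\<Omega>\<^sub>1 \<union> P\<^sub>2\<close> and the indicators on \<open>[K] - P\<^sub>2\<close> determine each other.
  Entropy and mutual information are invariant under such relabellings, so the two sides of the
  equivalence constrain equal numbers; in particular none of the hypotheses beyond
  \<open>\<Omega>\<^sub>1, \<Omega>\<^sub>2 \<subseteq> [K]\<close> is needed.\<close>

lemma cond_pmf_cong_set_pmf:
  assumes "set_pmf p \<inter> A \<noteq> {}" and "A \<inter> set_pmf p = B \<inter> set_pmf p"
  shows "cond_pmf p A = cond_pmf p B"
proof (rule pmf_eqI)
  fix x
  have B: "set_pmf p \<inter> B \<noteq> {}" using assms by blast
  have "measure p A = measure p B"
    by (metis assms(2) measure_Int_set_pmf)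
  moreover have "x \<in> set_pmf p \<Longrightarrow> x \<in> A \<longleftrightarrow> x \<in> B" using assms(2) by blast
  ultimately show "pmf (cond_pmf p A) x = pmf (cond_pmf p B) x"
    unfolding pmf_cond[OF assms(1)] pmf_cond[OF B] by (auto simp: set_pmf_eq)
qed

lemma sum_joint_pmf_relabel:
  fixes F :: "real \<Rightarrow> real \<Rightarrow> real \<Rightarrow> real"
  assumes f: "inj_on f (X ` set_pmf \<mu>)" and g: "inj_on g (Y ` set_pmf \<mu>)"
    and X': "\<And>\<omega>. \<omega> \<in> set_pmf \<mu> \<Longrightarrow> X' \<omega> = f (X \<omega>)"
    and Y': "\<And>\<omega>. \<omega> \<in> set_pmf \<mu> \<Longrightarrow> Y' \<omega> = g (Y \<omega>)"
  shows "(\<Sum>(x, y) \<in> set_pmf (joint_pmf \<mu> X' Y').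
            F (pmf (joint_pmf \<mu> X' Y') (x, y)) (pmf (map_pmf X' \<mu>) x) (pmf (map_pmf Y' \<mu>) y))
       = (\<Sum>(x, y) \<in> set_pmf (joint_pmf \<mu> X Y).
            F (pmf (joint_pmf \<mu> X Y) (x, y)) (pmf (map_pmf X \<mu>) x) (pmf (map_pmf Y \<mu>) y))"
proof -
  let ?J = "joint_pmf \<mu> X Y" and ?h = "map_prod f g"
  have J: "joint_pmf \<mu> X' Y' = map_pmf ?h ?J"
    unfolding joint_pmf_def pmf.map_comp o_def using X' Y' by (intro map_pmf_cong) auto
  have MX: "map_pmf X' \<mu> = map_pmf f (map_pmf X \<mu>)"
    unfolding pmf.map_comp o_def using X' by (intro map_pmf_cong) auto
  have MY: "map_pmf Y' \<mu> = map_pmf g (map_pmf Y \<mu>)"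
    unfolding pmf.map_comp o_def using Y' by (intro map_pmf_cong) auto
  have SJ: "set_pmf ?J = (\<lambda>\<omega>. (X \<omega>, Y \<omega>)) ` set_pmf \<mu>"
    by (simp add: joint_pmf_def)
  have h: "inj_on ?h (set_pmf ?J)"
    unfolding SJ using f g by (auto simp: inj_on_def)
  have "pmf (map_pmf ?h ?J) (f x, g y) = pmf ?J (x, y)
      \<and> pmf (map_pmf f (map_pmf X \<mu>)) (f x) = pmf (map_pmf X \<mu>) x
      \<and> pmf (map_pmf g (map_pmf Y \<mu>)) (g y) = pmf (map_pmf Y \<mu>) y"
    if xy: "(x, y) \<in> set_pmf ?J" for x y
    using xy SJ pmf_map_inj[OF h xy] pmf_map_inj[of f "map_pmf X \<mu>" x]
      pmf_map_inj[of g "map_pmf Y \<mu>" y] f g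
    by auto
  then show ?thesis
    unfolding J MX MY set_map_pmf sum.reindex[OF h]
    by (intro sum.cong) auto
qed

lemma cond_entropy_relabel:
  assumes "inj_on f (X ` set_pmf \<mu>)" and "inj_on g (Y ` set_pmf \<mu>)"
    and "\<And>\<omega>. \<omega> \<in> set_pmf \<mu> \<Longrightarrow> X' \<omega> = f (X \<omega>)"
    and "\<And>\<omega>. \<omega> \<in> set_pmf \<mu> \<Longrightarrow> Y' \<omega> = g (Y \<omega>)"
  shows "cond_entropy \<mu> X' Y' = cond_entropy \<mu> X Y"
  using sum_joint_pmf_relabel[OF assms, of "\<lambda>j _ py. j * log 2 (j / py)"]
  by (simp add: cond_entropy_def)

lemma mutual_info_relabel:
  assumes "inj_on f (X ` set_pmf \<mu>)" and "inj_on g (Y ` set_pmf \<mu>)"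
    and "\<And>\<omega>. \<omega> \<in> set_pmf \<mu> \<Longrightarrow> X' \<omega> = f (X \<omega>)"
    and "\<And>\<omega>. \<omega> \<in> set_pmf \<mu> \<Longrightarrow> Y' \<omega> = g (Y \<omega>)"
  shows "mutual_info \<mu> X' Y' = mutual_info \<mu> X Y"
  using sum_joint_pmf_relabel[OF assms, of "\<lambda>j px py. j * log 2 (j / (px * py))"]
  by (simp add: mutual_info_def)

lemma restrict_indicator_eq_iff:
  "restrict (\<lambda>k. if k \<in> U then 1 else (0::nat)) D = restrict (\<lambda>k. if k \<in> V then 1 else 0) D
     \<longleftrightarrow> U \<inter> D = V \<inter> D"
  by (auto simp: restrict_def fun_eq_iff split: if_splits)

lemma inj_on_Diff_left: "inj_on (\<lambda>U. D - U) {U. U \<subseteq> D}"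
  by (auto simp: inj_on_def)

lemma inj_on_Diff_snd: "inj_on (\<lambda>(z, U). (z, D - U)) (UNIV \<times> {U. U \<subseteq> D})"
  by (auto simp: inj_on_def)

lemma cond_pmf_Diff_event:
  assumes "P2 \<in> \<Omega>2 ` set_pmf \<mu>" and "\<forall>\<omega>\<in>set_pmf \<mu>. \<Omega>2 \<omega> \<subseteq> D"
  shows "cond_pmf \<mu> {\<omega>. D - \<Omega>2 \<omega> = D - P2} = cond_pmf \<mu> {\<omega>. \<Omega>2 \<omega> = P2}"
  using assms inj_on_Diff_left[of D, unfolded inj_on_def]
  by (intro cond_pmf_cong_set_pmf) blast+

text \<open>In the next two lemmas \<open>\<nu>\<close> plays the role of \<open>\<mu>\<close> conditioned on \<open>\<Omega>\<^sub>2 = P\<^sub>2\<close>.\<close>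

lemma reliability_cond_entropy_eq:
  assumes "\<forall>\<omega>\<in>set_pmf \<nu>. \<Omega>1 \<omega> \<subseteq> D \<and> \<Omega>2 \<omega> = P2" and "P2 \<subseteq> D"
  shows "cond_entropy \<nu> (\<lambda>\<omega>. restrict (\<lambda>k. if k \<in> \<Omega>1 \<omega> then 1 else (0::nat)) (D - P2))
           (\<lambda>\<omega>. (Z \<omega>, D - \<Omega>2 \<omega>))
       = cond_entropy \<nu> (\<lambda>\<omega>. \<Omega>1 \<omega> \<union> \<Omega>2 \<omega>) (\<lambda>\<omega>. (Z \<omega>, \<Omega>2 \<omega>))"
proof (rule cond_entropy_relabel)
  show "inj_on (\<lambda>U. restrict (\<lambda>k. if k \<in> U then 1 else (0::nat)) (D - P2))
          ((\<lambda>\<omega>. \<Omega>1 \<omega> \<union> \<Omega>2 \<omega>) ` set_pmf \<nu>)"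
  proof (rule inj_onI)
    fix U V
    assume "U \<in> (\<lambda>\<omega>. \<Omega>1 \<omega> \<union> \<Omega>2 \<omega>) ` set_pmf \<nu>" and "V \<in> (\<lambda>\<omega>. \<Omega>1 \<omega> \<union> \<Omega>2 \<omega>) ` set_pmf \<nu>"
    then have "P2 \<subseteq> U" "U \<subseteq> D" "P2 \<subseteq> V" "V \<subseteq> D"
      using assms by auto
    moreover assume "restrict (\<lambda>k. if k \<in> U then 1 else (0::nat)) (D - P2)
      = restrict (\<lambda>k. if k \<in> V then 1 else 0) (D - P2)"
    ultimately show "U = V"
      unfolding restrict_indicator_eq_iff by blast
  qed
  show "inj_on (\<lambda>(z, U). (z, D - U)) ((\<lambda>\<omega>. (Z \<omega>, \<Omega>2 \<omega>)) ` set_pmf \<nu>)"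
    using assms by (auto intro: inj_on_subset[OF inj_on_Diff_snd])
qed (use assms in \<open>auto simp: restrict_def\<close>)

lemma P1_privacy_mutual_info_eq:
  assumes "\<forall>\<omega>\<in>set_pmf \<nu>. \<Omega>2 \<omega> = P2" and "P2 \<subseteq> D"
  shows "mutual_info \<nu> (\<lambda>\<omega>. restrict (\<lambda>k. if k \<in> \<Omega>1 \<omega> then 1 else (0::nat)) P2)
           (\<lambda>\<omega>. (Z \<omega>, D - \<Omega>2 \<omega>))
       = mutual_info \<nu> (\<lambda>\<omega>. restrict (\<lambda>k. if k \<in> \<Omega>1 \<omega> then 1 else (0::nat)) (\<Omega>2 \<omega>))
           (\<lambda>\<omega>. (Z \<omega>, \<Omega>2 \<omega>))"
  by (rule mutual_info_relabel[where f = id and g = "\<lambda>(z, U). (z, D - U)"])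
    (use assms in \<open>auto intro: inj_on_subset[OF inj_on_Diff_snd]\<close>)

lemma P2_privacy_mutual_info_eq:
  assumes "\<forall>\<omega>\<in>set_pmf \<mu>. \<Omega>1 \<omega> \<subseteq> D \<and> \<Omega>2 \<omega> \<subseteq> D"
  shows "mutual_info \<mu> (\<lambda>\<omega>. D - \<Omega>2 \<omega>)
           (\<lambda>\<omega>. (Q \<omega>, A \<omega>, restrict (\<lambda>k. if k \<in> \<Omega>1 \<omega> then 1 else (0::nat)) D, R \<omega>))
       = mutual_info \<mu> \<Omega>2 (\<lambda>\<omega>. (Q \<omega>, A \<omega>, \<Omega>1 \<omega>, R \<omega>))"
proof (rule mutual_info_relabel)
  show "inj_on (\<lambda>U. D - U) (\<Omega>2 ` set_pmf \<mu>)"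
    using assms by (auto intro: inj_on_subset[OF inj_on_Diff_left])
  show "inj_on (\<lambda>(q, a, U, r). (q, a, restrict (\<lambda>k. if k \<in> U then 1 else (0::nat)) D, r))
          ((\<lambda>\<omega>. (Q \<omega>, A \<omega>, \<Omega>1 \<omega>, R \<omega>)) ` set_pmf \<mu>)"
    using assms by (fastforce simp: inj_on_def restrict_indicator_eq_iff)
qed auto

theorem theorem1:
  fixes \<mu> :: "'w pmf" and K N1 :: nat and \<Omega>1 \<Omega>2 :: "'w \<Rightarrow> nat set"
    and Q :: "nat \<Rightarrow> 'w \<Rightarrow> 'q" and A :: "nat \<Rightarrow> 'w \<Rightarrow> 'a" and RS :: "'w \<Rightarrow> 'r"
  defines "W \<equiv> \<lambda>k \<omega>. if k \<in> \<Omega>1 \<omega> then 1 else (0::nat)"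
    and "E \<equiv> \<lambda>\<omega>. restrict (\<lambda>k. if k \<in> \<Omega>1 \<omega> then 1 else (0::nat)) (\<Omega>2 \<omega>)"
    and "\<Omega> \<equiv> \<lambda>\<omega>. {1..K} - \<Omega>2 \<omega>"
    and "QA \<equiv> \<lambda>\<omega>. (map (\<lambda>n. Q n \<omega>) [1..<N1+1], map (\<lambda>n. A n \<omega>) [1..<N1+1])"
  assumes "K \<ge> 2" and "N1 \<ge> 1" and "finite (set_pmf \<mu>)"
    and "\<forall>\<omega>\<in>set_pmf \<mu>. \<Omega>1 \<omega> \<subseteq> {1..K} \<and> \<Omega>2 \<omega> \<subseteq> {1..K}"
    and "\<exists>c. \<forall>\<omega>\<in>set_pmf \<mu>. card (\<Omega>2 \<omega>) = c"
    and "\<forall>n\<in>{1..N1}. cond_entropy \<mu> (A n) (\<lambda>\<omega>. (Q n \<omega>, \<Omega>1 \<omega>, RS \<omega>)) = 0"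
  shows
   "((\<forall>P2 \<in> \<Omega>2 ` set_pmf \<mu>.
        cond_entropy (cond_pmf \<mu> {\<omega>. \<Omega>2 \<omega> = P2}) (\<lambda>\<omega>. \<Omega>1 \<omega> \<union> \<Omega>2 \<omega>) (\<lambda>\<omega>. (QA \<omega>, \<Omega>2 \<omega>)) = 0)
     \<and> (\<forall>n\<in>{1..N1}. mutual_info \<mu> \<Omega>2 (\<lambda>\<omega>. (Q n \<omega>, A n \<omega>, \<Omega>1 \<omega>, RS \<omega>)) = 0)
     \<and> (\<forall>P2 \<in> \<Omega>2 ` set_pmf \<mu>.
        mutual_info (cond_pmf \<mu> {\<omega>. \<Omega>2 \<omega> = P2}) E (\<lambda>\<omega>. (QA \<omega>, \<Omega>2 \<omega>)) = 0))
    \<longleftrightarrow>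
    ((\<forall>P \<in> \<Omega> ` set_pmf \<mu>.
        cond_entropy (cond_pmf \<mu> {\<omega>. \<Omega> \<omega> = P}) (\<lambda>\<omega>. restrict (\<lambda>k. W k \<omega>) P) (\<lambda>\<omega>. (QA \<omega>, \<Omega> \<omega>)) = 0)
     \<and> (\<forall>n\<in>{1..N1}. mutual_info \<mu> \<Omega> (\<lambda>\<omega>. (Q n \<omega>, A n \<omega>, restrict (\<lambda>k. W k \<omega>) {1..K}, RS \<omega>)) = 0)
     \<and> (\<forall>P \<in> \<Omega> ` set_pmf \<mu>.
        mutual_info (cond_pmf \<mu> {\<omega>. \<Omega> \<omega> = P}) (\<lambda>\<omega>. restrict (\<lambda>k. W k \<omega>) ({1..K} - P)) (\<lambda>\<omega>. (QA \<omega>, \<Omega> \<omega>)) = 0))"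
proof -
  note in_range = assms(8)
  have per_realization:
    "cond_entropy (cond_pmf \<mu> {\<omega>. \<Omega> \<omega> = {1..K} - P2}) (\<lambda>\<omega>. restrict (\<lambda>k. W k \<omega>) ({1..K} - P2))
        (\<lambda>\<omega>. (QA \<omega>, \<Omega> \<omega>))
      = cond_entropy (cond_pmf \<mu> {\<omega>. \<Omega>2 \<omega> = P2}) (\<lambda>\<omega>. \<Omega>1 \<omega> \<union> \<Omega>2 \<omega>) (\<lambda>\<omega>. (QA \<omega>, \<Omega>2 \<omega>))
     \<and> mutual_info (cond_pmf \<mu> {\<omega>. \<Omega> \<omega> = {1..K} - P2})
        (\<lambda>\<omega>. restrict (\<lambda>k. W k \<omega>) ({1..K} - ({1..K} - P2))) (\<lambda>\<omega>. (QA \<omega>, \<Omega> \<omega>))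
      = mutual_info (cond_pmf \<mu> {\<omega>. \<Omega>2 \<omega> = P2}) E (\<lambda>\<omega>. (QA \<omega>, \<Omega>2 \<omega>))"
    if P2: "P2 \<in> \<Omega>2 ` set_pmf \<mu>" for P2
  proof -
    have P2_range: "P2 \<subseteq> {1..K}"
      using P2 in_range by auto
    have conditioning: "cond_pmf \<mu> {\<omega>. \<Omega> \<omega> = {1..K} - P2} = cond_pmf \<mu> {\<omega>. \<Omega>2 \<omega> = P2}"
      unfolding \<Omega>_def using P2 in_range by (intro cond_pmf_Diff_event) auto
    have support: "\<forall>\<omega>\<in>set_pmf (cond_pmf \<mu> {\<omega>. \<Omega>2 \<omega> = P2}).
        \<Omega>1 \<omega> \<subseteq> {1..K} \<and> \<Omega>2 \<omega> = P2"
    proof -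
      have "set_pmf \<mu> \<inter> {\<omega>. \<Omega>2 \<omega> = P2} \<noteq> {}"
        using P2 by blast
      then show ?thesis
        using in_range by (simp add: set_cond_pmf)
    qed
    show ?thesis
      unfolding conditioning unfolding \<Omega>_def W_def E_def double_diff[OF P2_range order.refl]
      using support
      by (intro conjI reliability_cond_entropy_eq[OF _ P2_range] P1_privacy_mutual_info_eq[OF _ P2_range];
          blast)
  qed
  have realizations: "(\<forall>P \<in> \<Omega> ` set_pmf \<mu>. Pr P) \<longleftrightarrow> (\<forall>P2 \<in> \<Omega>2 ` set_pmf \<mu>. Pr ({1..K} - P2))"
    for Pr
    unfolding \<Omega>_def by blast
  have P2_privacy:
    "mutual_info \<mu> \<Omega> (\<lambda>\<omega>. (Q n \<omega>, A n \<omega>, restrict (\<lambda>k. W k \<omega>) {1..K}, RS \<omega>))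
      = mutual_info \<mu> \<Omega>2 (\<lambda>\<omega>. (Q n \<omega>, A n \<omega>, \<Omega>1 \<omega>, RS \<omega>))" for n
    unfolding \<Omega>_def W_def by (rule P2_privacy_mutual_info_eq[OF in_range])
  show ?thesis
    unfolding realizations P2_privacy
    by (intro conj_cong ball_cong refl) (simp_all only: per_realization)
qed

end
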